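(* Let $d\ge1$ and let $\theta\in\mathbb R^d$ be split into $B$ disjoint blocks $\theta^{(1)},\dots,\theta^{(B)}$ of sizes $d_1,\dots,d_B\ge1$ with $d_1+\dots+d_B=d$. Let $R_b=-(d_b-2)_+$ and $\pi_{\mathrm{MBS}}(\theta)=\prod_{b=1}^B\|\theta^{(b)}\|^{R_b}\cdot\|\theta\|^{-\gamma}$. For $N>0$ let $p(y\mid\theta)$ be the density of $\mathrm N_d(\theta,N^{-1}I_d)$. If $0\le\gamma<B(R_b+d_b)$ for every $b$, then $m_{\mathrm{MBS}}(y)=\int p(y\mid\theta)\pi_{\mathrm{MBS}}(\theta)\,\mathrm d\theta<\infty$ for every $y\in\mathbb R^d$.
   Context: $(x)_+=\max(x,0)$. *)

theory Defs
  imports "HOL-Analysis.Analysis"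
begin

definition pos_part :: "real \<Rightarrow> real" where
  "pos_part x = max x 0"

definition block_norm :: "'n::finite set \<Rightarrow> real^'n \<Rightarrow> real" where
  "block_norm I \<theta> = sqrt (\<Sum>i\<in>I. (\<theta> $ i)\<^sup>2)"

definition R_exp :: "nat \<Rightarrow> real" where
  "R_exp db = - pos_part (real db - 2)"

definition pi_MBS :: "nat \<Rightarrow> (nat \<Rightarrow> 'n::finite set) \<Rightarrow> real \<Rightarrow> real^'n \<Rightarrow> real" where
  "pi_MBS B I \<gamma> \<theta> =
     (\<Prod>b\<in>{1..B}. block_norm (I b) \<theta> powr R_exp (card (I b))) * norm \<theta> powr (- \<gamma>)"

definition normal_density :: "real \<Rightarrow> real^'n::finite \<Rightarrow> real^'n \<Rightarrow> real" where
  "normal_density N \<theta> y =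
     (N / (2 * pi)) powr (real CARD('n) / 2) * exp (- (N / 2) * (norm (y - \<theta>))\<^sup>2)"

definition m_MBS :: "real \<Rightarrow> nat \<Rightarrow> (nat \<Rightarrow> 'n::finite set) \<Rightarrow> real \<Rightarrow> real^'n \<Rightarrow> ennreal" where
  "m_MBS N B I \<gamma> y =
     (\<integral>\<^sup>+ \<theta>. ennreal (normal_density N \<theta> y * pi_MBS B I \<gamma> \<theta>) \<partial>lborel)"

end

theory Submission
  imports Defs "HOL-Probability.Distributions"
begin

text \<open>
  Split \<parallel>\<theta>\<parallel>^(-\<gamma>) evenly over the B blocks: every block norm is at most \<parallel>\<theta>\<parallel>, so the
  prior is bounded by the product over b of \<parallel>\<theta>^(b)\<parallel>^(a_b) with a_b = R_b - \<gamma>/B \<le> 0.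
  As |\<theta>_i| \<le> \<parallel>\<theta>^(b)\<parallel> for each coordinate i of block b, the b-th factor is at most the
  product of |\<theta>_i|^(a_b/d_b) over the block, and the hypothesis on \<gamma> says exactly that
  a_b/d_b > -1. Off the coordinate hyperplanes the integrand is therefore bounded by a
  product of one-dimensional functions |t|^e exp(-c(m - t)^2) with -1 < e \<le> 0, each of
  which is integrable.
\<close>

lemma integrable_gaussian:
  fixes c m :: real
  assumes "c > 0"
  shows "integrable lborel (\<lambda>t. exp (- c * (m - t)\<^sup>2))"
proof -
  define \<sigma> where "\<sigma> = 1 / sqrt (2 * c)"
  have \<sigma>_pos: "\<sigma> > 0"
    using assms by (simp add: \<sigma>_def)
  have \<sigma>_sq: "2 * \<sigma>\<^sup>2 = 1 / c"
    using assms by (simp add: \<sigma>_def power_divide)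
  have eq: "exp (- c * (m - t)\<^sup>2) = sqrt (2 * pi * \<sigma>\<^sup>2) * Distributions.normal_density m \<sigma> t" for t
  proof -
    have "- (t - m)\<^sup>2 / (2 * \<sigma>\<^sup>2) = - c * (m - t)\<^sup>2"
      using assms \<sigma>_sq by (simp add: power2_commute)
    then show ?thesis
      using \<sigma>_pos by (simp add: Distributions.normal_density_def)
  qed
  show ?thesis
    unfolding eq using \<sigma>_pos by (simp add: integrable_mult_right)
qed

lemma has_integral_abs_powr_minus_one_one:
  fixes e :: real
  assumes "e > -1"
  shows "((\<lambda>t. \<bar>t\<bar> powr e) has_integral (2 / (e + 1))) {-1..1}"
proof -
  have "((\<lambda>t. t powr e) has_integral (1 / (e + 1))) {0..1}"
    using has_integral_powr_from_0[OF assms, of 1] by simp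
  then have right: "((\<lambda>t. \<bar>t\<bar> powr e) has_integral (1 / (e + 1))) {0..1}"
    by (rule has_integral_cong[THEN iffD1, rotated]) auto
  then have "((\<lambda>x. (\<lambda>t. \<bar>t\<bar> powr e) (- x)) has_integral (1 / (e + 1))) {-1..-0}"
    by (subst has_integral_reflect_real)
  then have left: "((\<lambda>t. \<bar>t\<bar> powr e) has_integral (1 / (e + 1))) {-1..0}"
    by simp
  have "((\<lambda>t. \<bar>t\<bar> powr e) has_integral (1 / (e + 1) + 1 / (e + 1))) {-1..1}"
    by (rule has_integral_combine[OF _ _ left right]) auto
  then show ?thesis
    by (simp add: add_divide_distrib[symmetric])
qed

lemma nn_integral_abs_powr_gaussian_finite:
  fixes e c m :: real
  assumes "-1 < e" "e \<le> 0" "c > 0"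
  shows "(\<integral>\<^sup>+t. ennreal (\<bar>t\<bar> powr e * exp (- c * (m - t)\<^sup>2)) \<partial>lborel) < \<infinity>"
proof -
  let ?g = "\<lambda>t. exp (- c * (m - t)\<^sup>2)"
  let ?p = "\<lambda>t. indicator {-1..1} t * \<bar>t\<bar> powr e"
  have "?p = (\<lambda>t. if t \<in> {-1..1} then \<bar>t\<bar> powr e else 0)"
    by (auto simp: indicator_def)
  then have "(?p has_integral (2 / (e + 1))) UNIV"
    using has_integral_abs_powr_minus_one_one[OF assms(1)] by (simp only: has_integral_restrict_UNIV)
  then have "(\<integral>\<^sup>+t. ennreal (?p t) \<partial>lborel) = 2 / (e + 1)"
    by (intro nn_integral_has_integral_lborel) auto
  moreover have "(\<integral>\<^sup>+t. ennreal (?g t) \<partial>lborel) < \<infinity>"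
    using integrableD(2)[OF integrable_gaussian[OF assms(3)]] by (simp add: less_top)
  ultimately have "(\<integral>\<^sup>+t. ennreal (?p t) + ennreal (?g t) \<partial>lborel) < \<infinity>"
    by (simp add: nn_integral_add)
  moreover have "\<bar>t\<bar> powr e * ?g t \<le> ?p t + ?g t" for t
  proof (cases "\<bar>t\<bar> \<le> 1")
    case True
    then have "\<bar>t\<bar> powr e * ?g t \<le> \<bar>t\<bar> powr e"
      using assms(3) by (intro mult_left_le) auto
    with True show ?thesis
      by (simp add: indicator_def abs_le_iff add_increasing2)
  next
    case False
    then have "\<bar>t\<bar> powr e \<le> 1"
      using assms(2) powr_mono2'[of e 1 "\<bar>t\<bar>"] by simp
    then have "\<bar>t\<bar> powr e * ?g t \<le> ?g t"
      by (simp add: mult_left_le_one_le)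
    moreover have "t \<notin> {-1..1}"
      using False by auto
    ultimately show ?thesis
      by simp
  qed
  then have "ennreal (\<bar>t\<bar> powr e * ?g t) \<le> ennreal (?p t) + ennreal (?g t)" for t
    by (simp add: ennreal_leI flip: ennreal_plus)
  then have "(\<integral>\<^sup>+t. ennreal (\<bar>t\<bar> powr e * ?g t) \<partial>lborel)
      \<le> (\<integral>\<^sup>+t. ennreal (?p t) + ennreal (?g t) \<partial>lborel)"
    by (rule nn_integral_mono)
  ultimately show ?thesis
    by (rule le_less_trans[rotated])
qed

lemma nn_integral_lborel_vec_prod:
  fixes f :: "'n::finite \<Rightarrow> real \<Rightarrow> ennreal"
  assumes [measurable]: "\<And>i. f i \<in> borel_measurable borel"
  shows "(\<integral>\<^sup>+x. (\<Prod>i\<in>UNIV. f i (x $ i)) \<partial>(lborel :: (real^'n) measure))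
    = (\<Prod>i\<in>UNIV. \<integral>\<^sup>+t. f i t \<partial>lborel)"
proof -
  define F where "F b = f (SOME i. b = axis i (1::real))" for b :: "real^'n"
  have Basis: "(Basis :: (real^'n) set) = (\<lambda>i. axis i 1) ` UNIV"
    by (auto simp: Basis_vec_def)
  have inj: "inj (\<lambda>i::'n. axis i (1::real))"
    by (auto simp: inj_def axis_eq_axis)
  have F_axis: "F (axis i 1) = f i" for i
  proof -
    have "(SOME j. axis i (1::real) = axis j 1) = i"
      by (rule some_equality) (auto simp: axis_eq_axis)
    then show ?thesis
      by (simp add: F_def)
  qed
  have "(\<integral>\<^sup>+x. (\<Prod>b\<in>Basis. F b (x \<bullet> b)) \<partial>(lborel :: (real^'n) measure))
      = (\<Prod>b\<in>Basis. \<integral>\<^sup>+t. F b t \<partial>lborel)"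
    by (rule nn_integral_lborel_prod) (auto simp: Basis F_axis)
  then show ?thesis
    unfolding Basis prod.reindex[OF inj] by (simp add: F_axis inner_axis)
qed

lemma AE_lborel_vec_coords_nonzero:
  "AE x in (lborel :: (real^'n::finite) measure). \<forall>i\<in>UNIV. x $ i \<noteq> 0"
proof (rule AE_finite_allI)
  fix i :: 'n
  have "{x :: real^'n. x $ i = 0} \<in> null_sets lebesgue"
    using negligible_standard_hyperplane_cart negligible_iff_null_sets by blast
  moreover have "{x :: real^'n. x $ i = 0} \<in> sets lborel"
    by measurable
  ultimately have null: "{x :: real^'n. x $ i = 0} \<in> null_sets lborel"
    using null_sets_completion_iff by blast
  show "AE x in lborel. x $ i \<noteq> (0::real)"
    by (rule eventually_mono[OF AE_not_in[OF null]]) auto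
qed simp

lemma power2_norm_vec: "(norm x)\<^sup>2 = (\<Sum>i\<in>UNIV. (x $ i)\<^sup>2)"
  for x :: "real^'n::finite"
  unfolding power2_norm_eq_inner inner_vec_def by (simp add: power2_eq_square)

lemma normal_density_eq_prod:
  "Defs.normal_density N \<theta> y
    = (N / (2 * pi)) powr (real CARD('n) / 2) * (\<Prod>i\<in>UNIV. exp (- (N / 2) * (y $ i - \<theta> $ i)\<^sup>2))"
  for \<theta> y :: "real^'n::finite"
  by (simp add: Defs.normal_density_def power2_norm_vec sum_distrib_left exp_sum)

lemma nn_integral_normal_density_prod_abs_powr_finite:
  fixes e :: "'n::finite \<Rightarrow> real" and y :: "real^'n"
  assumes "N > 0" and "\<And>i. -1 < e i" and "\<And>i. e i \<le> 0"
  shows "(\<integral>\<^sup>+\<theta>. ennreal (Defs.normal_density N \<theta> y * (\<Prod>i\<in>UNIV. \<bar>\<theta> $ i\<bar> powr e i)) \<partial>lborel) < \<infinity>"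
proof -
  define K where "K = (N / (2 * pi)) powr (real CARD('n) / 2)"
  define h where "h i t = \<bar>t\<bar> powr e i * exp (- (N / 2) * (y $ i - t)\<^sup>2)" for i t
  have [measurable]: "(\<lambda>t. ennreal (h i t)) \<in> borel_measurable borel" for i
    unfolding h_def by measurable
  have "(\<integral>\<^sup>+\<theta>. ennreal (Defs.normal_density N \<theta> y * (\<Prod>i\<in>UNIV. \<bar>\<theta> $ i\<bar> powr e i)) \<partial>lborel)
      = (\<integral>\<^sup>+\<theta>. ennreal K * (\<Prod>i\<in>UNIV. ennreal (h i (\<theta> $ i))) \<partial>lborel)"
    by (intro nn_integral_cong) (simp add: normal_density_eq_prod h_def K_def prod.distrib
        prod_ennreal ennreal_mult prod_nonneg mult_ac)
  also have "\<dots> = ennreal K * (\<integral>\<^sup>+\<theta>. (\<Prod>i\<in>UNIV. ennreal (h i (\<theta> $ i))) \<partial>lborel)"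
    by (rule nn_integral_cmult) measurable
  also have "\<dots> = ennreal K * (\<Prod>i\<in>UNIV. \<integral>\<^sup>+t. ennreal (h i t) \<partial>lborel)"
    by (simp add: nn_integral_lborel_vec_prod[of "\<lambda>i t. ennreal (h i t)"])
  also have "\<dots> < \<infinity>"
  proof -
    have "(\<integral>\<^sup>+t. ennreal (h i t) \<partial>lborel) \<noteq> top" for i
      using nn_integral_abs_powr_gaussian_finite[of "e i" "N / 2" "y $ i"] assms
      by (simp add: h_def)
    then have "(\<Prod>i\<in>UNIV. \<integral>\<^sup>+t. ennreal (h i t) \<partial>lborel) \<noteq> top"
      unfolding ennreal_prod_eq_top by blast
    then show ?thesis
      by (simp add: ennreal_mult_less_top less_top)
  qed
  finally show ?thesis .
qed

lemma R_exp_nonpos: "R_exp d \<le> 0"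
  by (simp add: R_exp_def pos_part_def)

lemma abs_le_block_norm:
  assumes "i \<in> I"
  shows "\<bar>\<theta> $ i\<bar> \<le> block_norm I \<theta>"
proof -
  have "(\<theta> $ i)\<^sup>2 \<le> (\<Sum>j\<in>I. (\<theta> $ j)\<^sup>2)"
    using assms by (intro member_le_sum) auto
  then have "sqrt ((\<theta> $ i)\<^sup>2) \<le> block_norm I \<theta>"
    unfolding block_norm_def by (rule real_sqrt_le_mono)
  then show ?thesis
    by simp
qed

lemma block_norm_pos: "i \<in> I \<Longrightarrow> \<theta> $ i \<noteq> 0 \<Longrightarrow> 0 < block_norm I \<theta>"
  using abs_le_block_norm[of i I \<theta>] by linarith

lemma block_norm_le_norm: "block_norm I \<theta> \<le> norm \<theta>"
proof -
  have "block_norm I \<theta> \<le> sqrt ((norm \<theta>)\<^sup>2)"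
    unfolding block_norm_def power2_norm_vec by (intro real_sqrt_le_mono sum_mono2) auto
  then show ?thesis
    by simp
qed

lemma norm_powr_neg_le_prod_block_norm:
  assumes "finite S" "S \<noteq> {}" "\<gamma> \<ge> 0" "\<And>b. b \<in> S \<Longrightarrow> 0 < block_norm (I b) \<theta>"
  shows "norm \<theta> powr (- \<gamma>) \<le> (\<Prod>b\<in>S. block_norm (I b) \<theta> powr (- \<gamma> / card S))"
proof -
  obtain b where "b \<in> S"
    using assms(2) by blast
  then have "norm \<theta> > 0"
    using assms(4) block_norm_le_norm less_le_trans by blast
  moreover have "(\<Sum>b\<in>S. - \<gamma> / card S) = - \<gamma>"
    using assms(1,2) by simp
  ultimately have "norm \<theta> powr (- \<gamma>) = (\<Prod>b\<in>S. norm \<theta> powr (- \<gamma> / card S))"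
    using powr_sum[of "norm \<theta>" "\<lambda>b. - \<gamma> / card S" S] by simp
  also have "\<dots> \<le> (\<Prod>b\<in>S. block_norm (I b) \<theta> powr (- \<gamma> / card S))"
  proof (rule prod_mono)
    fix b assume "b \<in> S"
    then show "0 \<le> norm \<theta> powr (- \<gamma> / card S) \<and>
        norm \<theta> powr (- \<gamma> / card S) \<le> block_norm (I b) \<theta> powr (- \<gamma> / card S)"
      using powr_mono2'[of "- \<gamma> / card S" "block_norm (I b) \<theta>" "norm \<theta>"]
        assms(3) assms(4)[OF \<open>b \<in> S\<close>] block_norm_le_norm[of "I b" \<theta>] by (simp add: divide_nonpos_nonneg)
  qed
  finally show ?thesis .
qed

lemma block_norm_powr_le_prod_abs_powr:
  assumes "I \<noteq> {}" "a \<le> 0" "\<And>i. i \<in> I \<Longrightarrow> \<theta> $ i \<noteq> 0"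
  shows "block_norm I \<theta> powr a \<le> (\<Prod>i\<in>I. \<bar>\<theta> $ i\<bar> powr (a / card I))"
proof -
  have "block_norm I \<theta> > 0"
    using assms(1,3) block_norm_pos by blast
  moreover have "(\<Sum>i\<in>I. a / card I) = a"
    using assms(1) by simp
  ultimately have "block_norm I \<theta> powr a = (\<Prod>i\<in>I. block_norm I \<theta> powr (a / card I))"
    using powr_sum[of "block_norm I \<theta>" "\<lambda>i. a / card I" I] by simp
  also have "\<dots> \<le> (\<Prod>i\<in>I. \<bar>\<theta> $ i\<bar> powr (a / card I))"
  proof (rule prod_mono)
    fix i assume "i \<in> I"
    then show "0 \<le> block_norm I \<theta> powr (a / card I) \<and>
        block_norm I \<theta> powr (a / card I) \<le> \<bar>\<theta> $ i\<bar> powr (a / card I)"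
      using powr_mono2'[of "a / card I" "\<bar>\<theta> $ i\<bar>" "block_norm I \<theta>"]
        assms(2) assms(3)[OF \<open>i \<in> I\<close>] abs_le_block_norm[OF \<open>i \<in> I\<close>, of \<theta>]
      by (simp add: divide_nonpos_nonneg)
  qed
  finally show ?thesis .
qed

lemma pi_MBS_le_prod_abs_powr:
  fixes I :: "nat \<Rightarrow> 'n::finite set"
  assumes nonempty: "\<forall>b\<in>{1..B}. I b \<noteq> {}"
    and disjoint: "\<forall>b\<in>{1..B}. \<forall>c\<in>{1..B}. b \<noteq> c \<longrightarrow> I b \<inter> I c = {}"
    and cover: "(\<Union>b\<in>{1..B}. I b) = UNIV"
    and "0 \<le> \<gamma>" and nonzero: "\<forall>i. \<theta> $ i \<noteq> 0"
    and e: "\<And>b i. b \<in> {1..B} \<Longrightarrow> i \<in> I b \<Longrightarrow> e i = (R_exp (card (I b)) - \<gamma> / B) / card (I b)"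
  shows "pi_MBS B I \<gamma> \<theta> \<le> (\<Prod>i\<in>UNIV. \<bar>\<theta> $ i\<bar> powr e i)"
proof -
  let ?bn = "\<lambda>b. block_norm (I b) \<theta>"
  have bn_pos: "0 < ?bn b" if "b \<in> {1..B}" for b
    using nonempty nonzero that block_norm_pos by (metis all_not_in_conv)
  have "{1..B} \<noteq> {}"
    using cover by auto
  have "pi_MBS B I \<gamma> \<theta> = (\<Prod>b\<in>{1..B}. ?bn b powr R_exp (card (I b))) * norm \<theta> powr (- \<gamma>)"
    by (simp add: pi_MBS_def)
  also have "\<dots> \<le> (\<Prod>b\<in>{1..B}. ?bn b powr R_exp (card (I b))) * (\<Prod>b\<in>{1..B}. ?bn b powr (- \<gamma> / B))"
    using norm_powr_neg_le_prod_block_norm[of "{1..B}" \<gamma> I \<theta>] \<open>{1..B} \<noteq> {}\<close> \<open>0 \<le> \<gamma>\<close> bn_pos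
    by (intro mult_left_mono prod_nonneg) auto
  also have "\<dots> = (\<Prod>b\<in>{1..B}. ?bn b powr (R_exp (card (I b)) - \<gamma> / B))"
    by (simp add: prod.distrib[symmetric] powr_add[symmetric])
  also have "\<dots> \<le> (\<Prod>b\<in>{1..B}. \<Prod>i\<in>I b. \<bar>\<theta> $ i\<bar> powr e i)"
  proof (intro prod_mono conjI)
    fix b assume b: "b \<in> {1..B}"
    have "R_exp (card (I b)) - \<gamma> / B \<le> 0"
      using R_exp_nonpos[of "card (I b)"] divide_nonneg_nonneg[OF \<open>0 \<le> \<gamma>\<close>, of "real B"]
      by linarith
    then show "?bn b powr (R_exp (card (I b)) - \<gamma> / B) \<le> (\<Prod>i\<in>I b. \<bar>\<theta> $ i\<bar> powr e i)"
      using block_norm_powr_le_prod_abs_powr[of "I b"] nonempty nonzero b e by simp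
  qed simp
  also have "\<dots> = (\<Prod>i\<in>UNIV. \<bar>\<theta> $ i\<bar> powr e i)"
    using prod.UNION_disjoint[of "{1..B}" I "\<lambda>i. \<bar>\<theta> $ i\<bar> powr e i"] disjoint cover by simp
  finally show ?thesis .
qed

lemma obtain_block_index:
  assumes "\<forall>b\<in>S. \<forall>c\<in>S. b \<noteq> c \<longrightarrow> I b \<inter> I c = {}" and "(\<Union>b\<in>S. I b) = UNIV"
  obtains blk where "\<And>i. blk i \<in> S" "\<And>i. i \<in> I (blk i)"
    and "\<And>b i. b \<in> S \<Longrightarrow> i \<in> I b \<Longrightarrow> blk i = b"
proof -
  obtain blk where blk: "\<And>i. blk i \<in> S \<and> i \<in> I (blk i)"
    using assms(2) by (metis UN_iff UNIV_I)
  moreover have "blk i = b" if "b \<in> S" "i \<in> I b" for b i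
    using assms(1) blk that by blast
  ultimately show ?thesis
    using that by blast
qed

lemma block_exponent_bounds:
  assumes "B > 0" "d > 0" "0 \<le> \<gamma>" "\<gamma> < real B * (R_exp d + real d)"
  shows "-1 < (R_exp d - \<gamma> / B) / d" and "(R_exp d - \<gamma> / B) / d \<le> 0"
proof -
  have "\<gamma> / B < R_exp d + d"
    using assms(1,4) by (simp add: divide_less_eq mult.commute)
  moreover have "0 \<le> \<gamma> / B"
    using assms(3) by simp
  ultimately show "-1 < (R_exp d - \<gamma> / B) / d" and "(R_exp d - \<gamma> / B) / d \<le> 0"
    using assms(2) R_exp_nonpos[of d] by (simp_all add: less_divide_eq divide_nonpos_pos)
qed

theorem lemma10:
  fixes B :: nat and I :: "nat \<Rightarrow> 'n::finite set" and \<gamma> N :: real and y :: "real^'n"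
  assumes nonempty: "\<forall>b\<in>{1..B}. I b \<noteq> {}"
    and disjoint: "\<forall>b\<in>{1..B}. \<forall>c\<in>{1..B}. b \<noteq> c \<longrightarrow> I b \<inter> I c = {}"
    and cover: "(\<Union>b\<in>{1..B}. I b) = UNIV"
    and N_pos: "N > 0"
    and gamma_nonneg: "0 \<le> \<gamma>"
    and gamma_bound: "\<forall>b\<in>{1..B}. \<gamma> < real B * (R_exp (card (I b)) + real (card (I b)))"
  shows "m_MBS N B I \<gamma> y < \<infinity>"
proof -
  obtain blk where blk: "\<And>i. blk i \<in> {1..B}" "\<And>i. i \<in> I (blk i)"
    and blk_unique: "\<And>b i. b \<in> {1..B} \<Longrightarrow> i \<in> I b \<Longrightarrow> blk i = b"
    using obtain_block_index[OF disjoint cover] by blast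
  define e where "e i = (R_exp (card (I (blk i))) - \<gamma> / B) / card (I (blk i))" for i
  have e_bounds: "-1 < e i \<and> e i \<le> 0" for i
    using block_exponent_bounds[of B "card (I (blk i))" \<gamma>] blk[of i] nonempty gamma_nonneg
      gamma_bound by (auto simp: e_def card_gt_0_iff)
  have "AE \<theta> in lborel. ennreal (Defs.normal_density N \<theta> y * pi_MBS B I \<gamma> \<theta>)
      \<le> ennreal (Defs.normal_density N \<theta> y * (\<Prod>i\<in>UNIV. \<bar>\<theta> $ i\<bar> powr e i))"
    using AE_lborel_vec_coords_nonzero
  proof eventually_elim
    case (elim \<theta>)
    then show ?case
      using pi_MBS_le_prod_abs_powr[OF nonempty disjoint cover gamma_nonneg, of \<theta> e]
      by (intro ennreal_leI mult_left_mono) (auto simp: e_def blk_unique Defs.normal_density_def)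
  qed
  then have "m_MBS N B I \<gamma> y
      \<le> (\<integral>\<^sup>+\<theta>. ennreal (Defs.normal_density N \<theta> y * (\<Prod>i\<in>UNIV. \<bar>\<theta> $ i\<bar> powr e i)) \<partial>lborel)"
    unfolding m_MBS_def by (rule nn_integral_mono_AE)
  also have "\<dots> < \<infinity>"
    using nn_integral_normal_density_prod_abs_powr_finite N_pos e_bounds by blast
  finally show ?thesis .
qed

end
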